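(* Assume the standing assumptions of the context. For every finite non-void $\mathit{\Lambda}\subset\mathsf{V}$ and every bounded continuous $f:\mathit{\Omega}\to\mathbb{R}$, the function $\xi\mapsto\pi_{\mathit{\Lambda}}(f|\xi)=\int_{\mathit{\Omega}}f(\omega)\pi_{\mathit{\Lambda}}(d\omega|\xi)$ is bounded and continuous on $\mathit{\Omega}$.
   Context: $\mathsf{G}=(\mathsf{V},\mathsf{E})$ is a countable, connected, locally finite undirected graph; $n(x)$ the degree, $\rho$ the path distance, $o$ a fixed root, $w_\alpha(x)=e^{-\alpha\rho(o,x)}$, $\mathit{\Theta}(\alpha,\theta)=\sum_x\sum_{y\sim x}[n(x)n(y)]^\theta w_\alpha(x)$. Standing assumptions: $\theta>0$ fixed with $\mathit{\Theta}(\alpha,\theta)<\infty$ for some $\alpha>0$; $W:\mathbb{R}^2\to\mathbb{R}$ continuous, symmetric, $|W(u,v)|\le[I_W+J_W(|u|^r+|v|^r)]/2$ ($I_W,J_W,r>0$); $V:\mathbb{R}\to\mathbb{R}$ continuous with $V(u)\ge a_V|u|^q-c_V$ ($a_V,c_V>0$, $q>r+r/\theta$). $\mathit{\Omega}=\mathbb{R}^{\mathsf{V}}$ with the product topology. For finite non-void $\mathit{\Lambda}$ and $\xi\in\mathit{\Omega}$: $H_{\mathit{\Lambda}}(\omega_{\mathit{\Lambda}}|\xi)=\sum_{\langle x,y\rangle\in\mathsf{E}:x,y\in\mathit{\Lambda}}W(\omega(x),\omega(y))+\sum_{\langle x,y\rangle\in\mathsf{E}:x\in\mathit{\Lambda},y\notin\mathit{\Lambda}}W(\omega(x),\xi(y))+\sum_{x\in\mathit{\Lambda}}V(\omega(x))$,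 $\pi_{\mathit{\Lambda}}(A|\xi)=Z_{\mathit{\Lambda}}(\xi)^{-1}\int_{\mathbb{R}^{\mathit{\Lambda}}}\mathbb{I}_A(\omega_{\mathit{\Lambda}}\times\xi_{\mathit{\Lambda}^c})e^{-H_{\mathit{\Lambda}}(\omega_{\mathit{\Lambda}}|\xi)}d\omega_{\mathit{\Lambda}}$, $Z_{\mathit{\Lambda}}(\xi)$ normalizing. *)

theory Defs
  imports "HOL-Analysis.Analysis"
begin

definition edge_rel :: "('v \<Rightarrow> 'v \<Rightarrow> bool) \<Rightarrow> ('v \<times> 'v) set" where
  "edge_rel E = {(x, y). E x y}"

definition degree :: "('v \<Rightarrow> 'v \<Rightarrow> bool) \<Rightarrow> 'v \<Rightarrow> nat" where
  "degree E x = card {y. E x y}"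

definition path_dist :: "('v \<Rightarrow> 'v \<Rightarrow> bool) \<Rightarrow> 'v \<Rightarrow> 'v \<Rightarrow> nat" where
  "path_dist E x y = (LEAST k. (x, y) \<in> edge_rel E ^^ k)"

definition graph_ok :: "('v \<Rightarrow> 'v \<Rightarrow> bool) \<Rightarrow> bool" where
  "graph_ok E \<longleftrightarrow> countable (UNIV :: 'v set)
     \<and> (\<forall>x y. E x y \<longrightarrow> E y x) \<and> (\<forall>x. \<not> E x x)
     \<and> (\<forall>x. finite {y. E x y})
     \<and> (\<forall>x y. (x, y) \<in> (edge_rel E)\<^sup>*)"

definition weight :: "('v \<Rightarrow> 'v \<Rightarrow> bool) \<Rightarrow> 'v \<Rightarrow> real \<Rightarrow> 'v \<Rightarrow> real" where
  "weight E o\<^sub>0 \<alpha> x = exp (- \<alpha> * real (path_dist E o\<^sub>0 x))"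

text \<open>Theta(alpha, theta) < infinity, expressed as summability of the nonnegative
  family x \<mapsto> sum over neighbours y of [n(x) n(y)]^theta w_alpha(x).\<close>
definition Theta_finite :: "('v \<Rightarrow> 'v \<Rightarrow> bool) \<Rightarrow> 'v \<Rightarrow> real \<Rightarrow> real \<Rightarrow> bool" where
  "Theta_finite E o\<^sub>0 \<alpha> \<theta> \<longleftrightarrow>
     (\<lambda>x. \<Sum>y\<in>{y. E x y}. (real (degree E x) * real (degree E y)) powr \<theta> * weight E o\<^sub>0 \<alpha> x)
       summable_on UNIV"

definition concat_cfg :: "'v set \<Rightarrow> ('v \<Rightarrow> real) \<Rightarrow> ('v \<Rightarrow> real) \<Rightarrow> 'v \<Rightarrow> real" where
  "concat_cfg \<Lambda> \<omega> \<xi> = (\<lambda>x. if x \<in> \<Lambda> then \<omega> x else \<xi> x)"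

text \<open>Local Hamiltonian. The sum over unordered edges inside Lambda is written as half
  the sum over ordered pairs (W is symmetric).\<close>
definition hamiltonian ::
  "('v \<Rightarrow> 'v \<Rightarrow> bool) \<Rightarrow> (real \<Rightarrow> real \<Rightarrow> real) \<Rightarrow> (real \<Rightarrow> real) \<Rightarrow> 'v set
     \<Rightarrow> ('v \<Rightarrow> real) \<Rightarrow> ('v \<Rightarrow> real) \<Rightarrow> real" where
  "hamiltonian E W V \<Lambda> \<omega> \<xi> =
     (\<Sum>(x, y)\<in>{(x, y). x \<in> \<Lambda> \<and> y \<in> \<Lambda> \<and> E x y}. W (\<omega> x) (\<omega> y)) / 2
     + (\<Sum>(x, y)\<in>{(x, y). x \<in> \<Lambda> \<and> y \<notin> \<Lambda> \<and> E x y}. W (\<omega> x) (\<xi> y))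
     + (\<Sum>x\<in>\<Lambda>. V (\<omega> x))"

definition partition_fn ::
  "('v \<Rightarrow> 'v \<Rightarrow> bool) \<Rightarrow> (real \<Rightarrow> real \<Rightarrow> real) \<Rightarrow> (real \<Rightarrow> real) \<Rightarrow> 'v set
     \<Rightarrow> ('v \<Rightarrow> real) \<Rightarrow> real" where
  "partition_fn E W V \<Lambda> \<xi> =
     (\<integral>\<omega>. exp (- hamiltonian E W V \<Lambda> \<omega> \<xi>) \<partial>(PiM \<Lambda> (\<lambda>_. lborel)))"

definition local_gibbs ::
  "('v \<Rightarrow> 'v \<Rightarrow> bool) \<Rightarrow> (real \<Rightarrow> real \<Rightarrow> real) \<Rightarrow> (real \<Rightarrow> real) \<Rightarrow> 'v set
     \<Rightarrow> (('v \<Rightarrow> real) \<Rightarrow> real) \<Rightarrow> ('v \<Rightarrow> real) \<Rightarrow> real" where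
  "local_gibbs E W V \<Lambda> f \<xi> =
     (\<integral>\<omega>. f (concat_cfg \<Lambda> \<omega> \<xi>) * exp (- hamiltonian E W V \<Lambda> \<omega> \<xi>) \<partial>(PiM \<Lambda> (\<lambda>_. lborel)))
     / partition_fn E W V \<Lambda> \<xi>"

end

theory Submission
  imports Defs "HOL-Probability.Sinc_Integral"
begin

text \<open>For finite \<open>\<Lambda>\<close> the Hamiltonian is continuous in both the inner configuration \<open>\<omega>\<close> and the
  boundary condition \<open>\<xi>\<close>, and since \<open>q > r\<close> the self-interaction \<open>V\<close> dominates the pair interaction
  \<open>W\<close>: as long as the boundary spins adjacent to \<open>\<Lambda>\<close> stay bounded, \<open>exp (- H\<^sub>\<Lambda>(\<omega>|\<xi>))\<close> is bounded
  by one fixed integrable product \<open>\<Prod>x\<in>\<Lambda>. exp (K |\<omega> x|\<^sup>r - a |\<omega> x|\<^sup>q)\<close>. Dominated convergence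
  along a sequence \<open>\<xi>\<^sub>n \<rightarrow> \<xi>\<close> then makes numerator and (positive) denominator of \<open>\<pi>\<^sub>\<Lambda>(f|\<xi>)\<close>
  sequentially continuous, which suffices because \<open>\<Omega>\<close> is metrizable for countable \<open>V\<close>.
  Boundedness is just \<open>|\<pi>\<^sub>\<Lambda>(f|\<xi>)| \<le> sup |f|\<close>.\<close>

lemma continuous_on_countable_product_sequentially:
  fixes F :: "('v \<Rightarrow> 'a::metric_space) \<Rightarrow> 'b::topological_space"
  assumes countable: "countable (UNIV :: 'v set)"
    and sequential: "\<And>X \<xi>. X \<longlonglongrightarrow> \<xi> \<Longrightarrow> (\<lambda>n. F (X n)) \<longlonglongrightarrow> F \<xi>"
  shows "continuous_on UNIV F"
proof -
  obtain idx :: "'v \<Rightarrow> nat" where idx: "inj idx"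
    using countable by (auto simp: countable_def)
  \<comment> \<open>\<open>nat \<Rightarrow> 'a\<close> is a metric space, so there sequential continuity suffices.\<close>
  define enc :: "('v \<Rightarrow> 'a) \<Rightarrow> nat \<Rightarrow> 'a" where "enc = (\<lambda>\<xi> n. \<xi> (inv idx n))"
  define dec :: "(nat \<Rightarrow> 'a) \<Rightarrow> 'v \<Rightarrow> 'a" where "dec = (\<lambda>\<eta> x. \<eta> (idx x))"
  have dec_enc: "dec (enc \<xi>) = \<xi>" for \<xi>
    unfolding enc_def dec_def using idx by auto
  have "continuous_on UNIV enc" "continuous_on UNIV dec"
    unfolding enc_def dec_def by (auto intro: continuous_on_coordinatewise_then_product)
  have "continuous_on UNIV (F \<circ> dec)"
  proof (rule continuous_on_sequentiallyI)
    fix u :: "nat \<Rightarrow> nat \<Rightarrow> 'a" and a assume "u \<longlonglongrightarrow> a"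
    then have "(\<lambda>n. dec (u n)) \<longlonglongrightarrow> dec a"
      using continuous_on_tendsto_compose[OF \<open>continuous_on UNIV dec\<close>] by simp
    then show "(\<lambda>n. (F \<circ> dec) (u n)) \<longlonglongrightarrow> (F \<circ> dec) a"
      using sequential by simp
  qed
  then have "continuous_on UNIV (\<lambda>\<xi>. (F \<circ> dec) (enc \<xi>))"
    using continuous_on_compose2 \<open>continuous_on UNIV enc\<close> by blast
  then show ?thesis
    using dec_enc by simp
qed

lemma bounded_on_finite_if_tendsto:
  fixes X :: "nat \<Rightarrow> 'v \<Rightarrow> real"
  assumes "X \<longlonglongrightarrow> \<xi>" and "finite S"
  obtains R where "\<And>n y. y \<in> S \<Longrightarrow> \<bar>X n y\<bar> \<le> R"
proof -
  have "\<exists>K>0. \<forall>n. \<bar>X n y\<bar> \<le> K" for y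
  proof -
    have "(\<lambda>n. X n y) \<longlonglongrightarrow> \<xi> y"
      using continuous_on_tendsto_compose[OF continuous_on_product_coordinates assms(1)] by simp
    then show ?thesis
      by (metis Bseq_def convergentI convergent_imp_Bseq real_norm_def)
  qed
  then obtain K where K: "\<And>y. K y > 0" "\<And>y n. \<bar>X n y\<bar> \<le> K y"
    by metis
  have "\<bar>X n y\<bar> \<le> (\<Sum>y\<in>S. K y)" if "y \<in> S" for n y
    using K that assms(2) by (meson less_imp_le member_le_sum order_trans)
  then show thesis
    by (rule that)
qed

lemma borel_measurable_PiM_lborel_continuous:
  fixes g :: "('v \<Rightarrow> real) \<Rightarrow> 'b::topological_space"
  assumes fin: "finite \<Lambda>" and cont: "continuous_on UNIV g"
  shows "g \<in> borel_measurable (PiM \<Lambda> (\<lambda>_. lborel))"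
proof -
  define n where "n = card \<Lambda>"
  obtain e where e: "bij_betw e {0..<n} \<Lambda>"
    using ex_bij_betw_nat_finite[OF fin] unfolding n_def by blast
  define d where "d = the_inv_into {0..<n} e"
  have e_d: "e (d x) = x" and d_less: "d x < n" if "x \<in> \<Lambda>" for x
    using e that unfolding d_def
    by (auto simp: f_the_inv_into_f_bij_betw dest: bij_betw_the_inv_into[THEN bij_betwE])
  \<comment> \<open>Factor \<open>g\<close> through the countable product \<open>nat \<Rightarrow> real\<close>, whose Borel sets are the product ones.\<close>
  define T :: "('v \<Rightarrow> real) \<Rightarrow> nat \<Rightarrow> real" where "T = (\<lambda>\<omega> i. if i < n then \<omega> (e i) else 0)"
  define h where "h = (\<lambda>\<eta>. g (\<lambda>x. if x \<in> \<Lambda> then \<eta> (d x) else undefined))"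
  have T: "T \<in> measurable (PiM \<Lambda> (\<lambda>_. lborel)) (PiM UNIV (\<lambda>_. borel))"
    unfolding T_def
  proof (rule measurable_PiM_single')
    fix i :: nat
    show "(\<lambda>\<omega>. if i < n then \<omega> (e i) else 0) \<in> borel_measurable (PiM \<Lambda> (\<lambda>_. lborel))"
    proof (cases "i < n")
      case True
      then have "e i \<in> \<Lambda>"
        using e by (auto dest: bij_betwE)
      then show ?thesis
        using True by (simp add: measurable_component_singleton[of "e i" \<Lambda> "\<lambda>_. lborel", simplified])
    qed simp
  qed simp
  have "continuous_on UNIV h"
    unfolding h_def
    by (rule continuous_on_compose2[OF cont])
       (intro continuous_on_coordinatewise_then_product, case_tac "i \<in> \<Lambda>", auto)
  then have h: "h \<in> borel_measurable (PiM UNIV (\<lambda>_::nat. borel))"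
    using borel_measurable_continuous_onI sets_PiM_equal_borel measurable_cong_sets by blast
  have "h (T \<omega>) = g \<omega>" if "\<omega> \<in> space (PiM \<Lambda> (\<lambda>_. lborel))" for \<omega>
  proof -
    have "(\<lambda>x. if x \<in> \<Lambda> then T \<omega> (d x) else undefined) = \<omega>"
      using that e_d d_less by (auto simp: T_def space_PiM PiE_def extensional_def)
    then show ?thesis
      by (simp add: h_def)
  qed
  then show ?thesis
    using measurable_compose[OF T h] measurable_cong by metis
qed

lemma powr_le_half_powr_plus_const:
  fixes K a r q :: real
  assumes "K \<ge> 0" "a > 0" "0 < r" "r < q"
  shows "\<exists>C. \<forall>s\<ge>0. K * s powr r \<le> a / 2 * s powr q + C"
proof -
  \<comment> \<open>Beyond \<open>S\<close> one has \<open>s\<^sup>q\<^sup>-\<^sup>r \<ge> 2K/a\<close>; below \<open>S\<close> the left side is at most \<open>K S\<^sup>r\<close>.\<close>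
  define S where "S = max 1 ((2 * K / a) powr (1 / (q - r)))"
  have "S \<ge> 1"
    by (simp add: S_def)
  have "K * s powr r \<le> a / 2 * s powr q + K * S powr r" if "s \<ge> 0" for s
  proof (cases "s \<le> S")
    case True
    then have "K * s powr r \<le> K * S powr r"
      using that assms by (intro mult_left_mono powr_mono2) auto
    moreover have "0 \<le> a / 2 * s powr q"
      using assms by simp
    ultimately show ?thesis
      by linarith
  next
    case False
    have "2 * K / a = ((2 * K / a) powr (1 / (q - r))) powr (q - r)"
      using assms by (simp add: powr_powr)
    also have "\<dots> \<le> s powr (q - r)"
      using assms False by (intro powr_mono2) (auto simp: S_def)
    finally have "2 * K / a \<le> s powr (q - r)" .
    then have "K \<le> a / 2 * s powr (q - r)"
      using assms by (simp add: field_simps)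
    then have "K * s powr r \<le> a / 2 * s powr (q - r) * s powr r"
      by (rule mult_right_mono) simp
    also have "\<dots> = a / 2 * s powr q"
      using False \<open>S \<ge> 1\<close> by (simp add: powr_add[symmetric])
    finally show ?thesis
      using assms by (simp add: add_increasing2)
  qed
  then show ?thesis
    by blast
qed

lemma exp_neg_powr_le_inverse_square:
  fixes b q :: real
  assumes "b > 0" "q > 0"
  shows "\<exists>D>0. \<forall>s\<ge>0. exp (- (b * s powr q)) \<le> D / (1 + s^2)"
proof -
  define m :: nat where "m = nat \<lceil>2 / q\<rceil>"
  have "m > 0"
    using assms by (simp add: m_def)
  have "q * m \<ge> 2"
    using assms unfolding m_def by (smt (verit) divide_pos_pos le_divide_eq_numeral1(1) le_nat_iff
      mult.commute of_nat_nat pos_divide_le_eq real_nat_ceiling_ge)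
  define c where "c = (b / m) ^ m"
  have "c > 0"
    using assms \<open>m > 0\<close> by (simp add: c_def)
  \<comment> \<open>\<open>exp x \<ge> (x/m)\<^sup>m\<close> with \<open>q m \<ge> 2\<close> gives quadratic growth of \<open>exp (b s\<^sup>q)\<close>.\<close>
  have large: "c * (1 + s^2) / 2 \<le> exp (b * s powr q)" if "s \<ge> 1" for s
  proof -
    have "c * (1 + s^2) / 2 \<le> c * s^2"
      using \<open>c > 0\<close> that by (simp add: field_simps one_le_power)
    also have "s^2 \<le> s powr (q * m)"
      using that \<open>q * m \<ge> 2\<close> by (metis powr_mono powr_numeral of_nat_numeral one_le_numeral order_trans zero_le_one)
    then have "c * s^2 \<le> c * s powr (q * m)"
      using \<open>c > 0\<close> by simp
    also have "\<dots> = (b * s powr q / m) ^ m"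
      using that by (simp add: c_def power_mult_distrib powr_powr powr_realpow[symmetric] power_divide)
    also have "\<dots> \<le> (1 + b * s powr q / m) ^ m"
      using assms that by (intro power_mono) auto
    also have "\<dots> \<le> exp (b * s powr q)"
      using assms \<open>m > 0\<close> by (intro exp_ge_one_plus_x_over_n_power_n) (auto intro: order_trans[of _ 0])
    finally show ?thesis .
  qed
  have "exp (- (b * s powr q)) \<le> max 2 (2 / c) / (1 + s^2)" if "s \<ge> 0" for s
  proof (cases "s \<le> 1")
    case True
    have "exp (- (b * s powr q)) \<le> 1"
      using assms that by simp
    also have "1 \<le> 2 / (1 + s^2)"
      using True that by (simp add: le_divide_eq power_le_one) (smt (verit) zero_le_power2)
    also have "\<dots> \<le> max 2 (2 / c) / (1 + s^2)"
      by (intro divide_right_mono) auto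
    finally show ?thesis .
  next
    case False
    have "exp (- (b * s powr q)) = 1 / exp (b * s powr q)"
      by (simp add: exp_minus field_simps)
    also have "\<dots> \<le> 1 / (c * (1 + s^2) / 2)"
      using large[of s] False \<open>c > 0\<close> by (intro divide_left_mono) (auto intro!: mult_pos_pos add_pos_nonneg)
    also have "\<dots> = (2 / c) / (1 + s^2)"
      by simp
    also have "\<dots> \<le> max 2 (2 / c) / (1 + s^2)"
      by (intro divide_right_mono) auto
    finally show ?thesis .
  qed
  then show ?thesis
    by (intro exI[of _ "max 2 (2 / c)"]) auto
qed
lemma integrable_exp_powr_diff:
  fixes K a r q :: real
  assumes "K \<ge> 0" "a > 0" "0 < r" "r < q"
  shows "integrable lborel (\<lambda>t. exp (K * \<bar>t\<bar> powr r - a * \<bar>t\<bar> powr q))"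
proof -
  obtain C where C: "\<And>s. s \<ge> 0 \<Longrightarrow> K * s powr r \<le> a / 2 * s powr q + C"
    using powr_le_half_powr_plus_const[OF assms] by blast
  obtain D where D: "D > 0" "\<And>s. s \<ge> 0 \<Longrightarrow> exp (- (a/2 * s powr q)) \<le> D / (1 + s^2)"
    using exp_neg_powr_le_inverse_square[of "a/2" q] assms by auto
  show ?thesis
  proof (rule Bochner_Integration.integrable_bound)
    show "integrable lborel (\<lambda>t. exp C * D * inverse (1 + t^2))"
      using integrable_inverse_1_plus_square by (simp add: set_integrable_def einterval_def)
    show "AE t in lborel. norm (exp (K * \<bar>t\<bar> powr r - a * \<bar>t\<bar> powr q))
        \<le> norm (exp C * D * inverse (1 + t^2))"
    proof (intro AE_I2)
      fix t :: real
      have "K * \<bar>t\<bar> powr r - a * \<bar>t\<bar> powr q \<le> C + - (a/2 * \<bar>t\<bar> powr q)"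
        using C[of "\<bar>t\<bar>"] by simp
      then have "exp (K * \<bar>t\<bar> powr r - a * \<bar>t\<bar> powr q) \<le> exp C * exp (- (a/2 * \<bar>t\<bar> powr q))"
        by (simp add: exp_add[symmetric])
      also have "\<dots> \<le> exp C * (D / (1 + \<bar>t\<bar>^2))"
        using D(2)[of "\<bar>t\<bar>"] by (intro mult_left_mono) auto
      finally show "norm (exp (K * \<bar>t\<bar> powr r - a * \<bar>t\<bar> powr q)) \<le> norm (exp C * D * inverse (1 + t^2))"
        using D(1) by (simp add: field_simps)
    qed
  qed measurable
qed

lemma abs_integral_divide_le:
  fixes M :: "'a measure" and h g :: "'a \<Rightarrow> real"
  assumes g_nonneg: "\<And>x. g x \<ge> 0" and h_le: "\<And>x. \<bar>h x\<bar> \<le> B * g x" and "B \<ge> 0"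
  shows "\<bar>integral\<^sup>L M h / integral\<^sup>L M g\<bar> \<le> B"
proof (cases "integral\<^sup>L M g = 0")
  case False
  then have "integrable M g"
    using not_integrable_integral_eq by blast
  have pos: "integral\<^sup>L M g > 0"
    using False Bochner_Integration.integral_nonneg[of M g] g_nonneg by (simp add: order_less_le)
  have "\<bar>integral\<^sup>L M h\<bar> \<le> B * integral\<^sup>L M g"
  proof (cases "integrable M h")
    case True
    have "\<bar>integral\<^sup>L M h\<bar> \<le> integral\<^sup>L M (\<lambda>x. \<bar>h x\<bar>)"
      using integral_norm_bound[of M h] by simp
    also have "\<dots> \<le> integral\<^sup>L M (\<lambda>x. B * g x)"
      using True \<open>integrable M g\<close> h_le by (intro integral_mono) auto
    finally show ?thesis
      by simp
  qed (use pos \<open>B \<ge> 0\<close> in \<open>simp add: not_integrable_integral_eq\<close>)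
  then show ?thesis
    using pos by (simp add: divide_le_eq)
qed (use \<open>B \<ge> 0\<close> in simp)

lemma abs_local_gibbs_le:
  assumes "\<And>\<omega>. \<bar>f \<omega>\<bar> \<le> B" and "B \<ge> 0"
  shows "\<bar>local_gibbs E W V \<Lambda> f \<xi>\<bar> \<le> B"
  unfolding local_gibbs_def partition_fn_def
  by (rule abs_integral_divide_le) (use assms in \<open>auto simp: abs_mult mult_right_mono\<close>)

lemma abs_sum_le_card_mult:
  fixes f :: "'a \<Rightarrow> real" and T :: real
  assumes "\<And>p. p \<in> P \<Longrightarrow> \<bar>f p\<bar> \<le> T"
  shows "\<bar>sum f P\<bar> \<le> card P * T"
  by (rule order_trans[OF sum_abs sum_bounded_above]) (use assms in auto)

lemma continuous_on_concat_cfg [continuous_intros]: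
  assumes "continuous_on S f" and "continuous_on S g"
  shows "continuous_on S (\<lambda>z. concat_cfg \<Lambda> (f z) (g z))"
  unfolding concat_cfg_def
proof (intro continuous_on_coordinatewise_then_product)
  fix x
  show "continuous_on S (\<lambda>z. if x \<in> \<Lambda> then f z x else g z x)"
    using assms by (cases "x \<in> \<Lambda>") (auto intro: continuous_on_compose2[OF continuous_on_product_coordinates])
qed

locale gibbs_potentials =
  fixes E :: "'v \<Rightarrow> 'v \<Rightarrow> bool" and W :: "real \<Rightarrow> real \<Rightarrow> real" and V :: "real \<Rightarrow> real"
    and \<Lambda> :: "'v set" and I J r a c q :: real
  assumes finite_Lambda: "finite \<Lambda>"
    and locally_finite: "\<And>x. finite {y. E x y}"
    and W_cont: "continuous_on UNIV (\<lambda>(u, v). W u v)"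
    and W_bound: "\<And>u v. \<bar>W u v\<bar> \<le> (I + J * (\<bar>u\<bar> powr r + \<bar>v\<bar> powr r)) / 2"
    and V_cont: "continuous_on UNIV V"
    and V_bound: "\<And>u. V u \<ge> a * \<bar>u\<bar> powr q - c"
    and I_nonneg: "I \<ge> 0" and J_nonneg: "J \<ge> 0"
    and r_pos: "0 < r" and a_pos: "0 < a" and r_less_q: "r < q"
begin

definition inner_edges :: "('v \<times> 'v) set" where
  "inner_edges = {(x, y). x \<in> \<Lambda> \<and> y \<in> \<Lambda> \<and> E x y}"

definition boundary_edges :: "('v \<times> 'v) set" where
  "boundary_edges = {(x, y). x \<in> \<Lambda> \<and> y \<notin> \<Lambda> \<and> E x y}"

definition edge_terms :: nat where
  "edge_terms = card inner_edges + card boundary_edges"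

definition weight_majorant :: "('v \<Rightarrow> real) \<Rightarrow> real" where
  "weight_majorant \<omega> = (\<Prod>x\<in>\<Lambda>. exp (edge_terms * J * \<bar>\<omega> x\<bar> powr r - a * \<bar>\<omega> x\<bar> powr q))"

lemma finite_boundary_edges: "finite boundary_edges"
  unfolding boundary_edges_def
  by (rule finite_subset[of _ "Sigma \<Lambda> (\<lambda>x. {y. E x y})"]) (auto simp: finite_Lambda locally_finite)

lemma continuous_on_hamiltonian [continuous_intros]:
  assumes "continuous_on S f" and "continuous_on S g"
  shows "continuous_on S (\<lambda>z. hamiltonian E W V \<Lambda> (f z) (g z))"
proof -
  have W': "continuous_on S (\<lambda>z. W (u z) (v z))" if "continuous_on S u" "continuous_on S v" for u v
    using continuous_on_compose2[OF W_cont continuous_on_Pair[OF that]] by simp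
  have "continuous_on S (\<lambda>z. f z x)" "continuous_on S (\<lambda>z. g z x)" for x
    using assms by (auto intro: continuous_on_compose2[OF continuous_on_product_coordinates])
  then show ?thesis
    unfolding hamiltonian_def split_def
    by (intro continuous_intros W' continuous_on_compose2[OF V_cont]) auto
qed

lemma abs_W_le:
  assumes "\<bar>u\<bar> powr r \<le> S" and "\<bar>v\<bar> powr r \<le> S + R powr r"
  shows "\<bar>W u v\<bar> \<le> I + J * R powr r + J * S"
proof -
  have "J * (\<bar>u\<bar> powr r + \<bar>v\<bar> powr r) \<le> J * (2 * S + R powr r)"
    using assms J_nonneg by (intro mult_left_mono) auto
  moreover have "J * (2 * S + R powr r) = 2 * (J * S) + J * R powr r"
    by (simp add: algebra_simps)
  moreover have "0 \<le> J * R powr r"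
    using J_nonneg by simp
  ultimately show ?thesis
    using W_bound[of u v] I_nonneg by argo
qed

lemma neg_hamiltonian_le:
  assumes boundary: "\<And>x y. (x, y) \<in> boundary_edges \<Longrightarrow> \<bar>\<xi> y\<bar> \<le> R"
  shows "- hamiltonian E W V \<Lambda> \<omega> \<xi> \<le> edge_terms * (I + J * R powr r) + card \<Lambda> * c
           + (\<Sum>x\<in>\<Lambda>. edge_terms * J * \<bar>\<omega> x\<bar> powr r - a * \<bar>\<omega> x\<bar> powr q)"
proof -
  define S where "S = (\<Sum>x\<in>\<Lambda>. \<bar>\<omega> x\<bar> powr r)"
  have S_ge: "\<bar>\<omega> x\<bar> powr r \<le> S" if "x \<in> \<Lambda>" for x
    unfolding S_def using finite_Lambda that by (intro member_le_sum) auto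
  then have S_ge': "\<bar>\<omega> x\<bar> powr r \<le> S + R powr r" if "x \<in> \<Lambda>" for x
    using that by (simp add: add_increasing2)
  \<comment> \<open>Every pair term obeys the same bound \<open>T\<close>, in which the boundary spins enter only through \<open>R\<close>.\<close>
  define T where "T = I + J * R powr r + J * S"
  have inner: "\<bar>\<Sum>(x, y)\<in>inner_edges. W (\<omega> x) (\<omega> y)\<bar> \<le> card inner_edges * T"
    unfolding T_def by (rule abs_sum_le_card_mult) (auto simp: inner_edges_def intro!: abs_W_le S_ge S_ge')
  have "\<bar>\<xi> y\<bar> powr r \<le> R powr r" if "(x, y) \<in> boundary_edges" for x y
    using boundary[OF that] r_pos by (intro powr_mono2) auto
  then have "\<bar>\<xi> y\<bar> powr r \<le> S + R powr r" if "(x, y) \<in> boundary_edges" for x y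
    using that by (auto simp: S_def sum_nonneg intro: add_increasing)
  then have outer: "\<bar>\<Sum>(x, y)\<in>boundary_edges. W (\<omega> x) (\<xi> y)\<bar> \<le> card boundary_edges * T"
    unfolding T_def by (intro abs_sum_le_card_mult) (auto simp: boundary_edges_def intro!: abs_W_le S_ge S_ge')
  have "(\<Sum>x\<in>\<Lambda>. a * \<bar>\<omega> x\<bar> powr q - c) \<le> (\<Sum>x\<in>\<Lambda>. V (\<omega> x))"
    by (intro sum_mono V_bound)
  then have V_sum: "a * (\<Sum>x\<in>\<Lambda>. \<bar>\<omega> x\<bar> powr q) - card \<Lambda> * c \<le> (\<Sum>x\<in>\<Lambda>. V (\<omega> x))"
    by (simp add: sum_subtractf sum_distrib_left)
  have "0 \<le> T"
    using I_nonneg J_nonneg by (simp add: T_def S_def sum_nonneg)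
  then have "- hamiltonian E W V \<Lambda> \<omega> \<xi> \<le> edge_terms * T - (a * (\<Sum>x\<in>\<Lambda>. \<bar>\<omega> x\<bar> powr q) - card \<Lambda> * c)"
    using inner outer V_sum
    unfolding hamiltonian_def inner_edges_def[symmetric] boundary_edges_def[symmetric] edge_terms_def
    by (simp add: algebra_simps)
  also have "\<dots> = edge_terms * (I + J * R powr r) + card \<Lambda> * c
           + (\<Sum>x\<in>\<Lambda>. edge_terms * J * \<bar>\<omega> x\<bar> powr r - a * \<bar>\<omega> x\<bar> powr q)"
    unfolding T_def S_def by (simp add: sum_subtractf sum_distrib_left algebra_simps)
  finally show ?thesis .
qed

lemma exp_neg_hamiltonian_le:
  assumes "\<And>x y. (x, y) \<in> boundary_edges \<Longrightarrow> \<bar>\<xi> y\<bar> \<le> R"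
  shows "exp (- hamiltonian E W V \<Lambda> \<omega> \<xi>)
           \<le> exp (edge_terms * (I + J * R powr r) + card \<Lambda> * c) * weight_majorant \<omega>"
proof -
  have "exp (- hamiltonian E W V \<Lambda> \<omega> \<xi>)
      \<le> exp (edge_terms * (I + J * R powr r) + card \<Lambda> * c
           + (\<Sum>x\<in>\<Lambda>. edge_terms * J * \<bar>\<omega> x\<bar> powr r - a * \<bar>\<omega> x\<bar> powr q))"
    using neg_hamiltonian_le[OF assms] by simp
  then show ?thesis
    using finite_Lambda by (simp add: exp_add exp_sum weight_majorant_def)
qed

lemma integrable_weight_majorant: "integrable (PiM \<Lambda> (\<lambda>_. lborel)) weight_majorant"
proof -
  interpret product_sigma_finite "\<lambda>_::'v. lborel"
    by standard
  have "integrable lborel (\<lambda>t. exp (edge_terms * J * \<bar>t\<bar> powr r - a * \<bar>t\<bar> powr q))"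
    using J_nonneg a_pos r_pos r_less_q by (intro integrable_exp_powr_diff) auto
  then show ?thesis
    unfolding weight_majorant_def by (intro product_integrable_prod finite_Lambda)
qed

lemma integrable_and_tendsto_Boltzmann_integral:
  fixes g :: "('v \<Rightarrow> real) \<Rightarrow> real"
  assumes g_cont: "continuous_on UNIV g" and g_bound: "\<And>\<omega>. \<bar>g \<omega>\<bar> \<le> B" and X: "X \<longlonglongrightarrow> \<xi>"
  shows "integrable (PiM \<Lambda> (\<lambda>_. lborel))
           (\<lambda>\<omega>. g (concat_cfg \<Lambda> \<omega> \<xi>) * exp (- hamiltonian E W V \<Lambda> \<omega> \<xi>))"
    and "(\<lambda>n. \<integral>\<omega>. g (concat_cfg \<Lambda> \<omega> (X n)) * exp (- hamiltonian E W V \<Lambda> \<omega> (X n))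
             \<partial>PiM \<Lambda> (\<lambda>_. lborel))
         \<longlonglongrightarrow> (\<integral>\<omega>. g (concat_cfg \<Lambda> \<omega> \<xi>) * exp (- hamiltonian E W V \<Lambda> \<omega> \<xi>)
             \<partial>PiM \<Lambda> (\<lambda>_. lborel))"
proof -
  let ?F = "\<lambda>\<zeta> \<omega>. g (concat_cfg \<Lambda> \<omega> \<zeta>) * exp (- hamiltonian E W V \<Lambda> \<omega> \<zeta>)"
  obtain R where R: "\<And>n y. y \<in> snd ` boundary_edges \<Longrightarrow> \<bar>X n y\<bar> \<le> R"
    using bounded_on_finite_if_tendsto[OF X finite_imageI[OF finite_boundary_edges]] by blast
  define C where "C = exp (edge_terms * (I + J * R powr r) + card \<Lambda> * c)"
  have F_measurable: "?F \<zeta> \<in> borel_measurable (PiM \<Lambda> (\<lambda>_. lborel))" for \<zeta>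
    by (intro borel_measurable_PiM_lborel_continuous finite_Lambda continuous_intros
        continuous_on_compose2[OF g_cont]) auto
  have lim: "(\<lambda>n. ?F (X n) \<omega>) \<longlonglongrightarrow> ?F \<xi> \<omega>" for \<omega>
  proof -
    have "continuous_on UNIV (\<lambda>\<zeta>. ?F \<zeta> \<omega>)"
      by (intro continuous_intros continuous_on_compose2[OF g_cont]) auto
    from continuous_on_tendsto_compose[OF this X] show ?thesis
      by simp
  qed
  have "0 \<le> B"
    using g_bound[of undefined] by linarith
  have exp_le: "exp (- hamiltonian E W V \<Lambda> \<omega> (X n)) \<le> C * weight_majorant \<omega>" for n \<omega>
    unfolding C_def by (rule exp_neg_hamiltonian_le) (use R in force)
  have dominated: "norm (?F (X n) \<omega>) \<le> B * (C * weight_majorant \<omega>)" for n \<omega>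
  proof -
    have "norm (?F (X n) \<omega>) \<le> B * exp (- hamiltonian E W V \<Lambda> \<omega> (X n))"
      using g_bound by (simp add: abs_mult mult_right_mono)
    also have "\<dots> \<le> B * (C * weight_majorant \<omega>)"
      using exp_le \<open>0 \<le> B\<close> by (rule mult_left_mono)
    finally show ?thesis .
  qed
  have dominated_limit: "norm (?F \<xi> \<omega>) \<le> B * (C * weight_majorant \<omega>)" for \<omega>
    by (rule LIMSEQ_le_const2[OF tendsto_norm[OF lim]]) (use dominated in auto)
  have majorant: "integrable (PiM \<Lambda> (\<lambda>_. lborel)) (\<lambda>\<omega>. B * (C * weight_majorant \<omega>))"
    using integrable_weight_majorant by simp
  show "integrable (PiM \<Lambda> (\<lambda>_. lborel)) (?F \<xi>)"
    by (rule integrable_dominated_convergence[OF F_measurable F_measurable majorant])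
       (use lim dominated dominated_limit in auto)
  show "(\<lambda>n. integral\<^sup>L (PiM \<Lambda> (\<lambda>_. lborel)) (?F (X n))) \<longlonglongrightarrow> integral\<^sup>L (PiM \<Lambda> (\<lambda>_. lborel)) (?F \<xi>)"
    by (rule integral_dominated_convergence[OF F_measurable F_measurable majorant])
       (use lim dominated dominated_limit in auto)
qed

lemma partition_fn_pos: "partition_fn E W V \<Lambda> \<xi> > 0"
proof -
  let ?M = "PiM \<Lambda> (\<lambda>_::'v. lborel :: real measure)"
  interpret product_sigma_finite "\<lambda>_::'v. lborel"
    by standard
  have integrable: "integrable ?M (\<lambda>\<omega>. exp (- hamiltonian E W V \<Lambda> \<omega> \<xi>))"
    using integrable_and_tendsto_Boltzmann_integral(1)[of "\<lambda>_. 1" 1 "\<lambda>_. \<xi>" \<xi>] by simp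
  have "emeasure ?M (space ?M) = (\<Prod>x\<in>\<Lambda>. emeasure lborel (UNIV :: real set))"
    using emeasure_PiM[OF finite_Lambda, of "\<lambda>_. UNIV"] by (simp add: space_PiM)
  then have "emeasure ?M (space ?M) \<noteq> 0"
    using finite_Lambda by simp
  then have "\<not> (AE \<omega> in ?M. False)"
    by (metis ae_filter_eq_bot_iff trivial_limit_def)
  then have "\<not> (AE \<omega> in ?M. exp (- hamiltonian E W V \<Lambda> \<omega> \<xi>) = 0)"
    by simp
  then have "partition_fn E W V \<Lambda> \<xi> \<noteq> 0"
    using integral_nonneg_eq_0_iff_AE[OF integrable] unfolding partition_fn_def by simp
  moreover have "partition_fn E W V \<Lambda> \<xi> \<ge> 0"
    unfolding partition_fn_def by simp
  ultimately show ?thesis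
    by linarith
qed

lemma continuous_on_local_gibbs:
  fixes f :: "('v \<Rightarrow> real) \<Rightarrow> real"
  assumes countable: "countable (UNIV :: 'v set)"
    and f_cont: "continuous_on UNIV f" and f_bound: "\<And>\<omega>. \<bar>f \<omega>\<bar> \<le> B"
  shows "continuous_on UNIV (local_gibbs E W V \<Lambda> f)"
proof (rule continuous_on_countable_product_sequentially[OF countable])
  fix X :: "nat \<Rightarrow> 'v \<Rightarrow> real" and \<xi> assume X: "X \<longlonglongrightarrow> \<xi>"
  show "(\<lambda>n. local_gibbs E W V \<Lambda> f (X n)) \<longlonglongrightarrow> local_gibbs E W V \<Lambda> f \<xi>"
    unfolding local_gibbs_def
  proof (rule tendsto_divide)
    show "(\<lambda>n. partition_fn E W V \<Lambda> (X n)) \<longlonglongrightarrow> partition_fn E W V \<Lambda> \<xi>"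
      using integrable_and_tendsto_Boltzmann_integral(2)[of "\<lambda>_. 1" 1, OF _ _ X]
      unfolding partition_fn_def by simp
    show "partition_fn E W V \<Lambda> \<xi> \<noteq> 0"
      using partition_fn_pos[of \<xi>] by linarith
  qed (rule integrable_and_tendsto_Boltzmann_integral(2)[OF f_cont f_bound X])
qed

end

theorem lemma4p4:
  fixes E :: "'v \<Rightarrow> 'v \<Rightarrow> bool" and o\<^sub>0 :: 'v
    and \<theta> I\<^sub>W J\<^sub>W r a\<^sub>V c\<^sub>V q :: real
    and W :: "real \<Rightarrow> real \<Rightarrow> real" and V :: "real \<Rightarrow> real"
    and \<Lambda> :: "'v set" and f :: "('v \<Rightarrow> real) \<Rightarrow> real"
  assumes graph: "graph_ok E"
    and theta_pos: "\<theta> > 0"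
    and Theta_fin: "\<exists>\<alpha>>0. Theta_finite E o\<^sub>0 \<alpha> \<theta>"
    and W_cont: "continuous_on UNIV (\<lambda>(u, v). W u v)"
    and W_sym: "\<And>u v. W u v = W v u"
    and consts_pos: "I\<^sub>W > 0" "J\<^sub>W > 0" "r > 0"
    and W_bound: "\<And>u v. \<bar>W u v\<bar> \<le> (I\<^sub>W + J\<^sub>W * (\<bar>u\<bar> powr r + \<bar>v\<bar> powr r)) / 2"
    and V_cont: "continuous_on UNIV V"
    and V_consts: "a\<^sub>V > 0" "c\<^sub>V > 0"
    and V_bound: "\<And>u. V u \<ge> a\<^sub>V * \<bar>u\<bar> powr q - c\<^sub>V"
    and q_big: "q > r + r / \<theta>"
    and Lambda: "finite \<Lambda>" "\<Lambda> \<noteq> {}"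
    and f_cont: "continuous_on UNIV f"
    and f_bdd: "bounded (range f)"
  shows "bounded (range (local_gibbs E W V \<Lambda> f))
         \<and> continuous_on UNIV (local_gibbs E W V \<Lambda> f)"
proof -
  have "r < q"
    using q_big theta_pos consts_pos(3) by (smt (verit) divide_pos_pos)
  then interpret gibbs_potentials E W V \<Lambda> I\<^sub>W J\<^sub>W r a\<^sub>V c\<^sub>V q
    using graph Lambda(1) W_cont W_bound V_cont V_bound consts_pos V_consts
    by unfold_locales (auto simp: graph_ok_def)
  obtain B where B: "\<And>\<omega>. \<bar>f \<omega>\<bar> \<le> B"
    using f_bdd by (auto simp: bounded_iff)
  have "bounded (range (local_gibbs E W V \<Lambda> f))"
    using abs_local_gibbs_le[of f "max B 0"] B unfolding bounded_iff
    by (metis max.coboundedI1 max.cobounded2 rangeE real_norm_def)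
  moreover have "continuous_on UNIV (local_gibbs E W V \<Lambda> f)"
    using graph f_cont B by (intro continuous_on_local_gibbs) (auto simp: graph_ok_def)
  ultimately show ?thesis ..
qed

end
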